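(* For any configuration $G$, if $G$ is feasible then there exist a patient DRIP $D_{pat}$ and a decision function $f_{pat}$ for $D_{pat}$ such that $(D_{pat},f_{pat})$ is a dedicated leader election algorithm for $G$.
   Context: Model. A configuration is a finite simple undirected connected graph $G$ in which each node $v$ is tagged with a non-negative integer $t_v$ (its wakeup tag); smallest tag $0$, span $\sigma$ = largest tag. Nodes are anonymous and communicate in synchronous global rounds. A node $v$ wakes up in the first global round $r\le t_v$ in which it receives a message, if any, and otherwise in global round $t_v$. Its local clock is $0$ in its wakeup round; it acts from local round $1$ on. In each round a node transmits a message to all neighbours, listens, or terminates. A listening node receives $M$ if exactly one neighbour transmits ($M$), hears collision noise (distinct from silence and messages) if at least two neighbours transmit, and silence otherwise; a transmitting node hears nothing. History $\mathcal H_v[i]$ of $v$ in local round $i\ge0$: $(\emptyset)$ if $v$ transmits or hears silence (or $i=0$ and spontaneous wakeup), $(M)$ if $v$ receives $M$ (or $i=0$ and woken by $M$), $( * )$ on collision. A DRIP is a function $D$ from finite history vectors to $\{\mathit{listen},\mathit{transmit}(M),\mathit{terminate}\}$; node $v$ in local round $i\ge1$ performs $D(\mathcal H_v[0\ldots i-1])$; every node must eventually terminate permanently, $done_v$ being the first local round it terminates. A decision function $f$ for $D$ maps $\mathcal H_v[0\ldots done_v]$ to $\{0,1\}$. $(D,f)$ is a dedicated leader election algorithm for $G$ if, when all nodes of $G$ execute $D$, $f$ outputs $1$ at exactly one node; $G$ is feasible if such a pair exists. A DRIP is patient (for $G$) if, when executed by all nodes of $G$, no node transmits in any of the global rounds $0,\ldots,\sigma$.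 *)

theory Defs
  imports Main
begin

text \<open>Entries of a history: silence (or transmitting, or spontaneous wakeup),
  a received message, or collision noise.\<close>
datatype 'm hentry = Sil | Msg 'm | Coll

datatype 'm action = Listen | Transmit 'm | Terminate

type_synonym 'm drip = "'m hentry list \<Rightarrow> 'm action"

text \<open>Decision function: maps the final history H[0..done] to {0,1}; True encodes 1.\<close>
type_synonym 'm decision = "'m hentry list \<Rightarrow> bool"

text \<open>Local state of an awake node: wakeup (global) round, history so far
  (entries for local rounds 0.. current), terminated flag.\<close>
datatype 'm nstate = NS nat "'m hentry list" bool

text \<open>Configuration: nodes are all elements of a finite type 'v, E the adjacency relation,
  t the wakeup tags.\<close>
definition configuration :: "('v::finite \<Rightarrow> 'v \<Rightarrow> bool) \<Rightarrow> ('v \<Rightarrow> nat) \<Rightarrow> bool" where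
  "configuration E t \<longleftrightarrow>
     (\<forall>u v. E u v \<longrightarrow> E v u) \<and> (\<forall>v. \<not> E v v) \<and>
     (\<forall>u v. (u, v) \<in> {(x, y). E x y}\<^sup>*) \<and> (\<exists>v. t v = 0)"

definition span :: "('v::finite \<Rightarrow> nat) \<Rightarrow> nat" where
  "span t = Max (range t)"

text \<open>Message transmitted by v in the current global round, given the states at the end of
  the previous round (None = v does not transmit).\<close>
definition tx :: "'m drip \<Rightarrow> ('v \<Rightarrow> 'm nstate option) \<Rightarrow> 'v \<Rightarrow> 'm option" where
  "tx D S v = (case S v of
      Some (NS w h False) \<Rightarrow> (case D h of Transmit m \<Rightarrow> Some m | _ \<Rightarrow> None)
    | _ \<Rightarrow> None)"

definition hear :: "('v::finite \<Rightarrow> 'v \<Rightarrow> bool) \<Rightarrow> 'm drip \<Rightarrow> ('v \<Rightarrow> 'm nstate option) \<Rightarrow> 'v \<Rightarrow> 'm hentry" where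
  "hear E D S v = (let T = {u. E v u \<and> tx D S u \<noteq> None} in
      if card T = 0 then Sil
      else if card T = 1 then Msg (the (tx D S (the_elem T)))
      else Coll)"

text \<open>One synchronous global round r.  A terminating node is treated as listening in its
  terminating round (so that H[done] is defined) and does nothing afterwards.\<close>
definition step :: "('v::finite \<Rightarrow> 'v \<Rightarrow> bool) \<Rightarrow> ('v \<Rightarrow> nat) \<Rightarrow> 'm drip \<Rightarrow> nat
                     \<Rightarrow> ('v \<Rightarrow> 'm nstate option) \<Rightarrow> ('v \<Rightarrow> 'm nstate option)" where
  "step E t D r S v = (case S v of
      None \<Rightarrow> (case hear E D S v of
                 Msg m \<Rightarrow> (if r \<le> t v then Some (NS r [Msg m] False) else None)
               | _ \<Rightarrow> (if r = t v then Some (NS r [Sil] False) else None))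
    | Some (NS w h True) \<Rightarrow> Some (NS w h True)
    | Some (NS w h False) \<Rightarrow> (case D h of
          Transmit m \<Rightarrow> Some (NS w (h @ [Sil]) False)
        | Listen \<Rightarrow> Some (NS w (h @ [hear E D S v]) False)
        | Terminate \<Rightarrow> Some (NS w (h @ [hear E D S v]) True)))"

text \<open>run E t D r = states of all nodes at the end of global round r.\<close>
fun run :: "('v::finite \<Rightarrow> 'v \<Rightarrow> bool) \<Rightarrow> ('v \<Rightarrow> nat) \<Rightarrow> 'm drip \<Rightarrow> nat \<Rightarrow> ('v \<Rightarrow> 'm nstate option)" where
  "run E t D 0 = step E t D 0 (\<lambda>_. None)"
| "run E t D (Suc r) = step E t D (Suc r) (run E t D r)"

definition before :: "('v::finite \<Rightarrow> 'v \<Rightarrow> bool) \<Rightarrow> ('v \<Rightarrow> nat) \<Rightarrow> 'm drip \<Rightarrow> nat \<Rightarrow> ('v \<Rightarrow> 'm nstate option)" where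
  "before E t D r = (case r of 0 \<Rightarrow> (\<lambda>_. None) | Suc r' \<Rightarrow> run E t D r')"

definition transmits_in :: "('v::finite \<Rightarrow> 'v \<Rightarrow> bool) \<Rightarrow> ('v \<Rightarrow> nat) \<Rightarrow> 'm drip \<Rightarrow> nat \<Rightarrow> 'v \<Rightarrow> bool" where
  "transmits_in E t D r v \<longleftrightarrow> tx D (before E t D r) v \<noteq> None"

definition terminated_with :: "('v::finite \<Rightarrow> 'v \<Rightarrow> bool) \<Rightarrow> ('v \<Rightarrow> nat) \<Rightarrow> 'm drip \<Rightarrow> 'v \<Rightarrow> 'm hentry list \<Rightarrow> bool" where
  "terminated_with E t D v h \<longleftrightarrow> (\<exists>r w. run E t D r v = Some (NS w h True))"

definition all_terminate :: "('v::finite \<Rightarrow> 'v \<Rightarrow> bool) \<Rightarrow> ('v \<Rightarrow> nat) \<Rightarrow> 'm drip \<Rightarrow> bool" where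
  "all_terminate E t D \<longleftrightarrow> (\<forall>v. \<exists>h. terminated_with E t D v h)"

definition dedicated_LE :: "('v::finite \<Rightarrow> 'v \<Rightarrow> bool) \<Rightarrow> ('v \<Rightarrow> nat) \<Rightarrow> 'm drip \<Rightarrow> 'm decision \<Rightarrow> bool" where
  "dedicated_LE E t D f \<longleftrightarrow> all_terminate E t D \<and>
     (\<exists>!v. \<exists>h. terminated_with E t D v h \<and> f h)"

text \<open>Messages are natural numbers (encoding arbitrary finite messages).\<close>
definition feasible :: "('v::finite \<Rightarrow> 'v \<Rightarrow> bool) \<Rightarrow> ('v \<Rightarrow> nat) \<Rightarrow> bool" where
  "feasible E t \<longleftrightarrow> (\<exists>(D :: nat drip) f. dedicated_LE E t D f)"

definition patient :: "('v::finite \<Rightarrow> 'v \<Rightarrow> bool) \<Rightarrow> ('v \<Rightarrow> nat) \<Rightarrow> 'm drip \<Rightarrow> bool" where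
  "patient E t D \<longleftrightarrow> (\<forall>r \<le> span t. \<forall>v. \<not> transmits_in E t D r v)"

end

theory Submission
  imports Defs
begin

(* Run a given algorithm D delayed by k = \<sigma> global rounds.  Since nobody transmits before
   round \<sigma> + 1, every node v of the delayed execution wakes spontaneously at its tag t_v and can
   reconstruct the history it has in the original execution: there it is woken either by a
   message, which arrives k rounds later in the delayed execution, hence no later than local round k, or
   spontaneously at t_v, which is local round k of the delayed node.  From then on the delayed
   node acts as D on the reconstructed history, so round n + k of the delayed execution mirrors
   round n of the original one, and every node terminates with a history from which its original
   final history, hence its decision, is recovered. *)

fun delayed_history :: "nat \<Rightarrow> 'm hentry list \<Rightarrow> 'm hentry list option" where
  "delayed_history k [] = None"
| "delayed_history k (Msg m # h) = Some (Msg m # h)"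
| "delayed_history 0 (x # h) = Some (Sil # h)"
| "delayed_history (Suc k) (x # h) = delayed_history k h"

lemma delayed_history_append_None:
  assumes "delayed_history k h = None"
  shows "delayed_history k (h @ [x]) =
    (case x of Msg m \<Rightarrow> Some [Msg m] | _ \<Rightarrow> if length h = k then Some [Sil] else None)"
  using assms
proof (induction k h rule: delayed_history.induct)
  case (1 k)
  then show ?case by (cases x; cases k) auto
qed (auto split: hentry.split)

lemma delayed_history_append_Some:
  "delayed_history k h = Some hs \<Longrightarrow> delayed_history k (h @ [x]) = Some (hs @ [x])"
  by (induction k h arbitrary: hs rule: delayed_history.induct) auto

lemma delayed_history_replicate_Sil:
  "delayed_history k (replicate m Sil) = (if m \<le> k then None else Some (replicate (m - k) Sil))"
proof (induction m arbitrary: k)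
  case (Suc m)
  then show ?case by (cases k) auto
qed simp

definition patient_drip :: "nat \<Rightarrow> 'm drip \<Rightarrow> 'm drip" where
  "patient_drip k D h = (case delayed_history k h of None \<Rightarrow> Listen | Some hs \<Rightarrow> D hs)"

definition patient_decision :: "nat \<Rightarrow> 'm decision \<Rightarrow> 'm decision" where
  "patient_decision k f h = (case delayed_history k h of None \<Rightarrow> False | Some hs \<Rightarrow> f hs)"

lemma tag_le_span: "t v \<le> span t"
  unfolding span_def by (rule Max_ge) auto

lemma step_awake:
  assumes "S v = Some (NS w h False)"
  shows "step E t D r S v =
    Some (NS w (h @ [case D h of Transmit m \<Rightarrow> Sil | _ \<Rightarrow> hear E D S v]) (D h = Terminate))"
  using assms by (cases "D h") (simp_all add: step_def)

lemma hear_silent: "(\<And>u. tx D S u = None) \<Longrightarrow> hear E D S v = Sil"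
  by (simp add: hear_def)

definition silent_run :: "('v \<Rightarrow> nat) \<Rightarrow> nat \<Rightarrow> 'v \<Rightarrow> 'm nstate option" where
  "silent_run t r v = (if t v \<le> r then Some (NS (t v) (replicate (r - t v + 1) Sil) False) else None)"

lemma patient_drip_replicate_Sil: "m \<le> k \<Longrightarrow> patient_drip k D (replicate m Sil) = Listen"
  by (simp add: patient_drip_def delayed_history_replicate_Sil)

lemma tx_patient_drip_silent_run: "r < k \<Longrightarrow> tx (patient_drip k D) (silent_run t r) u = None"
  using patient_drip_replicate_Sil[of "r - t u + 1" k D] by (simp add: tx_def silent_run_def)

lemma run_patient_drip_silent:
  assumes "\<And>u. t u \<le> k" and "r \<le> k"
  shows "run E t (patient_drip k D) r = silent_run t r"
  using assms(2)
proof (induction r)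
  case 0
  have "hear E (patient_drip k D) (\<lambda>_. None) v = Sil" for v
    by (rule hear_silent) (simp add: tx_def)
  then show ?case by (auto simp: step_def silent_run_def)
next
  case (Suc r)
  then have run_r: "run E t (patient_drip k D) r = silent_run t r" by simp
  have silent: "hear E (patient_drip k D) (silent_run t r) v = Sil" for v
    using Suc.prems by (intro hear_silent tx_patient_drip_silent_run) simp
  have "step E t (patient_drip k D) (Suc r) (silent_run t r) v = silent_run t (Suc r) v" for v
  proof (cases "t v \<le> r")
    case True
    have "patient_drip k D (replicate (r - t v + 1) Sil) = Listen"
      using True Suc.prems by (intro patient_drip_replicate_Sil) simp
    with True silent show ?thesis
      by (simp add: step_awake silent_run_def Suc_diff_le replicate_append_same)
  next
    case False
    with silent show ?thesis by (auto simp: step_def silent_run_def)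
  qed
  then show ?case using run_r by auto
qed

lemma patient_patient_drip: "patient E t (patient_drip (span t) D)"
proof -
  have "tx (patient_drip (span t) D) (before E t (patient_drip (span t) D) r) v = None"
    if "r \<le> span t" for r v
  proof (cases r)
    case (Suc r')
    with that show ?thesis
      by (simp add: before_def run_patient_drip_silent tag_le_span tx_patient_drip_silent_run)
  qed (simp add: before_def tx_def)
  then show ?thesis by (simp add: patient_def transmits_in_def)
qed

(* For a node still asleep in the original run, the length of its history in the delayed run
   tells when its tag is reached. *)
definition simulates :: "nat \<Rightarrow> nat \<Rightarrow> nat \<Rightarrow> 'm nstate option \<Rightarrow> 'm nstate option \<Rightarrow> bool" where
  "simulates k tv n st' st \<longleftrightarrow> (case st of
      None \<Rightarrow> n < tv \<and>
        (\<exists>h. st' = Some (NS tv h False) \<and> delayed_history k h = None \<and> length h + tv = Suc (n + k))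
    | Some (NS w hs b) \<Rightarrow> (\<exists>h. st' = Some (NS tv h b) \<and> delayed_history k h = Some hs))"

lemma tx_patient_drip:
  assumes "simulates k tv n (S' u) (S u)"
  shows "tx (patient_drip k D) S' u = tx D S u"
proof (cases "S u")
  case None
  with assms show ?thesis by (auto simp: simulates_def tx_def patient_drip_def)
next
  case (Some st)
  with assms show ?thesis
    by (cases st) (auto simp: simulates_def tx_def patient_drip_def split: bool.split)
qed

lemma simulates_step:
  assumes sim: "\<And>u. simulates k (t u) n (S' u) (S u)"
  shows "simulates k (t v) (Suc n) (step E t (patient_drip k D) (Suc n + k) S' v) (step E t D (Suc n) S v)"
proof -
  have same_tx: "tx (patient_drip k D) S' = tx D S"
    by (rule ext, rule tx_patient_drip, rule sim)
  have same_hear: "hear E (patient_drip k D) S' v = hear E D S v"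
    unfolding hear_def same_tx ..
  show ?thesis
  proof (cases "S v")
    case None
    with sim[of v] obtain h where asleep: "n < t v" and S'v: "S' v = Some (NS (t v) h False)"
      and h: "delayed_history k h = None" "length h + t v = Suc (n + k)"
      by (auto simp: simulates_def)
    then have "step E t (patient_drip k D) (Suc n + k) S' v = Some (NS (t v) (h @ [hear E D S v]) False)"
      using same_hear by (simp add: step_awake patient_drip_def)
    moreover have "length h = k \<longleftrightarrow> Suc n = t v"
      using asleep h(2) by arith
    ultimately show ?thesis
      using None asleep h by (cases "hear E D S v") (auto simp: simulates_def step_def delayed_history_append_None)
  next
    case (Some st)
    then obtain w hs b where Sv: "S v = Some (NS w hs b)" by (cases st) auto
    with sim[of v] obtain h where S'v: "S' v = Some (NS (t v) h b)" and h: "delayed_history k h = Some hs"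
      by (auto simp: simulates_def)
    show ?thesis
    proof (cases b)
      case True
      with Sv S'v h show ?thesis by (simp add: simulates_def step_def)
    next
      case False
      have "patient_drip k D h = D hs" using h by (simp add: patient_drip_def)
      with False Sv S'v h same_hear show ?thesis
        by (cases "D hs") (simp_all add: simulates_def step_awake delayed_history_append_Some)
    qed
  qed
qed

lemma run_patient_drip_simulates:
  assumes tags: "\<And>u. t u \<le> k"
  shows "simulates k (t v) n (run E t (patient_drip k D) (n + k) v) (run E t D n v)"
proof (induction n arbitrary: v)
  case 0
  have "hear E D (\<lambda>_. None) v = Sil"
    by (rule hear_silent) (simp add: tx_def)
  moreover have "delayed_history k (replicate (k - t v + 1) Sil) = (if t v = 0 then Some [Sil] else None)"
    using delayed_history_replicate_Sil[of k "k - t v + 1"] tags[of v] by auto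
  ultimately show ?case
    using tags[of v] by (auto simp: run_patient_drip_silent[OF tags] silent_run_def simulates_def step_def
        simp del: replicate_Suc)
next
  case (Suc n)
  then show ?case using simulates_step[OF Suc] by simp
qed

lemma run_terminated_persists:
  assumes "run E t D r v = Some (NS w h True)" and "r \<le> r'"
  shows "run E t D r' v = Some (NS w h True)"
  using assms(2)
proof (induction r' rule: dec_induct)
  case base
  show ?case using assms(1) .
next
  case (step r')
  then show ?case by (simp add: step_def)
qed

lemma terminated_with_unique:
  assumes "terminated_with E t D v h" and "terminated_with E t D v h'"
  shows "h = h'"
proof -
  obtain r w r' w' where "run E t D r v = Some (NS w h True)" "run E t D r' v = Some (NS w' h' True)"
    using assms unfolding terminated_with_def by blast
  then have "run E t D (max r r') v = Some (NS w h True)" "run E t D (max r r') v = Some (NS w' h' True)"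
    by (auto intro: run_terminated_persists)
  then show ?thesis by simp
qed

lemma terminated_with_patient_drip:
  assumes tags: "\<And>u. t u \<le> k" and "terminated_with E t D v h"
  shows "\<exists>h'. terminated_with E t (patient_drip k D) v h' \<and> delayed_history k h' = Some h"
proof -
  obtain r w where "run E t D r v = Some (NS w h True)"
    using assms(2) unfolding terminated_with_def by blast
  with run_patient_drip_simulates[where t = t, OF tags, of v r E D]
  obtain h' where "run E t (patient_drip k D) (r + k) v = Some (NS (t v) h' True)" "delayed_history k h' = Some h"
    unfolding simulates_def by auto
  then show ?thesis
    unfolding terminated_with_def by blast
qed

lemma dedicated_LE_patient_drip:
  assumes tags: "\<And>u. t u \<le> k" and LE: "dedicated_LE E t D f"
  shows "dedicated_LE E t (patient_drip k D) (patient_decision k f)"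
proof -
  have terminates: "\<exists>h. terminated_with E t D v h" for v
    using LE by (simp add: dedicated_LE_def all_terminate_def)
  have same_leader: "(\<exists>h'. terminated_with E t (patient_drip k D) v h' \<and> patient_decision k f h') \<longleftrightarrow>
      (\<exists>h. terminated_with E t D v h \<and> f h)" for v
  proof -
    obtain h where h: "terminated_with E t D v h"
      using terminates by blast
    then obtain h' where h': "terminated_with E t (patient_drip k D) v h'" "delayed_history k h' = Some h"
      using terminated_with_patient_drip[where t = t, OF tags] by blast
    have "terminated_with E t D v h0 \<longleftrightarrow> h0 = h" for h0
      using h terminated_with_unique by blast
    moreover have "terminated_with E t (patient_drip k D) v h0 \<longleftrightarrow> h0 = h'" for h0
      using h'(1) terminated_with_unique by blast
    ultimately show ?thesis
      using h'(2) by (simp add: patient_decision_def)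
  qed
  have "all_terminate E t (patient_drip k D)"
    unfolding all_terminate_def using terminates terminated_with_patient_drip[where t = t, OF tags] by blast
  with LE show ?thesis
    unfolding dedicated_LE_def same_leader by blast
qed

theorem lemma9:
  fixes E :: "'v::finite \<Rightarrow> 'v \<Rightarrow> bool" and t :: "'v \<Rightarrow> nat"
  assumes "configuration E t"
    and "feasible E t"
  shows "\<exists>(Dpat :: nat drip) fpat. patient E t Dpat \<and> dedicated_LE E t Dpat fpat"
proof -
  obtain D :: "nat drip" and f where "dedicated_LE E t D f"
    using assms(2) unfolding feasible_def by blast
  with tag_le_span have "dedicated_LE E t (patient_drip (span t) D) (patient_decision (span t) f)"
    by (rule dedicated_LE_patient_drip)
  with patient_patient_drip show ?thesis by blast
qed

end
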